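(* Let $n,r$ be positive integers, and let $M(n,r)$ be the maximum of $\mathcal{R}(\mathcal{F})=\Delta(\mathcal{F})/\delta(\mathcal{F})$ over all maximal intersecting families $\mathcal{F}\subseteq\binom{[n]}{r}$ with $\bigcup\mathcal{F}=[n]$. (i) For any values of $n$ and $r$, $M(n,r)\le n+r^r$. In particular, if $r<\frac{\log n}{\log\log n}$, then $M(n,r)\le(1+o(1))n$ (as $n\to\infty$). (ii) If $2r+2<n$, then \[ M(n,r)\ \ge\ n-2r+3-\frac{n-2r+2}{\binom{2r-3}{r-2}}. \] In particular, if $r=r(n)\to\infty$ and $r<\frac{\log n}{\log\log n}$, then $M(n,r)\sim n$ (i.e. $M(n,r)/n\to 1$ as $n\to\infty$).
   Context: $[n]=\{1,\dots,n\}$ and $\binom{[n]}{r}$ denotes the family of all $r$-element subsets of $[n]$. A family $\mathcal{F}$ of sets is intersecting if $F_1\cap F_2\neq\emptyset$ for all $F_1,F_2\in\mathcal{F}$. A family $\mathcal{F}\subseteq\binom{[n]}{r}$ is maximal intersecting if it is intersecting and for every $G\in\binom{[n]}{r}\setminus\mathcal{F}$ there is $F\in\mathcal{F}$ with $F\cap G=\emptyset$. For $x\in[n]$, the degree $d(x)$ is the number of sets of $\mathcal{F}$ containing $x$; $\Delta(\mathcal{F})$ and $\delta(\mathcal{F})$ are the maximum and minimum degree over $x\in[n]$. The condition $\bigcup\mathcal{F}=[n]$ guarantees $\delta(\mathcal{F})>0$. Asymptotic notation ($o(1)$, $\sim$) refers to $n\to\infty$ with $r=r(n)$. *)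

theory Defs
  imports Complex_Main
begin

definition intersecting :: "nat set set \<Rightarrow> bool" where
  "intersecting F \<longleftrightarrow> (\<forall>A\<in>F. \<forall>B\<in>F. A \<inter> B \<noteq> {})"

definition maximal_intersecting :: "nat \<Rightarrow> nat \<Rightarrow> nat set set \<Rightarrow> bool" where
  "maximal_intersecting n r F \<longleftrightarrow>
     F \<subseteq> {A. A \<subseteq> {1..n} \<and> card A = r} \<and> intersecting F \<and>
     (\<forall>G. G \<subseteq> {1..n} \<and> card G = r \<and> G \<notin> F \<longrightarrow> (\<exists>A\<in>F. A \<inter> G = {}))"

definition degree :: "nat set set \<Rightarrow> nat \<Rightarrow> nat" where
  "degree F x = card {A\<in>F. x \<in> A}"

definition max_degree :: "nat \<Rightarrow> nat set set \<Rightarrow> nat" where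
  "max_degree n F = Max (degree F ` {1..n})"

definition min_degree :: "nat \<Rightarrow> nat set set \<Rightarrow> nat" where
  "min_degree n F = Min (degree F ` {1..n})"

definition ratio :: "nat \<Rightarrow> nat set set \<Rightarrow> real" where
  "ratio n F = real (max_degree n F) / real (min_degree n F)"

definition admissible :: "nat \<Rightarrow> nat \<Rightarrow> nat set set set" where
  "admissible n r = {F. maximal_intersecting n r F \<and> \<Union>F = {1..n}}"

definition M :: "nat \<Rightarrow> nat \<Rightarrow> real" where
  "M n r = Max (ratio n ` admissible n r)"

end

theory Submission
  imports Defs "HOL-Real_Asymp.Real_Asymp"
begin

text \<open>
Let x be a point of minimum degree. A member of F avoiding x is either a
minimal transversal of F, and there are at most r^r of these (extend a partial transversal
by a point of a member it misses, at most r choices each time), or it contains a redundant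
point a; exchanging a for x yields a set still meeting every member, hence a member of F by
maximality, and it contains x. Each member containing x arises in this way at most n - r
times, so |F| \<le> (n - r + 1) \<delta> + r^r, while \<Delta> \<le> |F|.

With C = {2, ..., 2r - 2}, the r-sets inside C together with the r-sets
containing 1 and at least r - 2 points of C form a maximal intersecting family covering [n].
A point outside C \<union> {1} has degree binom(2r - 3, r - 2), and the point 1 has degree at least
n - 2r + 3 times as large.

Finally r < log n / log log n forces r^r = o(n), which gives the asymptotic statements.
\<close>

definition transversal :: "'a set set \<Rightarrow> 'a set \<Rightarrow> bool" where
  "transversal F T \<longleftrightarrow> (\<forall>A\<in>F. A \<inter> T \<noteq> {})"

definition minimal_transversal :: "'a set set \<Rightarrow> 'a set \<Rightarrow> bool" where
  "minimal_transversal F T \<longleftrightarrow> transversal F T \<and> (\<forall>T'. T' \<subset> T \<longrightarrow> \<not> transversal F T')"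

lemma minimal_transversal_eq_if_transversal_subset:
  "minimal_transversal F T \<Longrightarrow> transversal F P \<Longrightarrow> P \<subseteq> T \<Longrightarrow> T = P"
  unfolding minimal_transversal_def by blast

lemma card_minimal_transversals_extending_le:
  assumes U: "finite U" and F: "\<And>A. A \<in> F \<Longrightarrow> A \<subseteq> U \<and> card A \<le> r"
  shows "card {T. T \<subseteq> U \<and> P \<subseteq> T \<and> card T = card P + k \<and> minimal_transversal F T} \<le> r ^ k"
proof (induction k arbitrary: P)
  case 0
  have "{T. T \<subseteq> U \<and> P \<subseteq> T \<and> card T = card P + 0 \<and> minimal_transversal F T} \<subseteq> {P}"
  proof
    fix T assume T: "T \<in> {T. T \<subseteq> U \<and> P \<subseteq> T \<and> card T = card P + 0 \<and> minimal_transversal F T}"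
    then have "finite T" using finite_subset[OF _ U] by blast
    with T show "T \<in> {P}" using card_subset_eq[of T P] by auto
  qed
  then show ?case using card_mono[of "{P}"] by simp
next
  case (Suc k)
  show ?case
  proof (cases "transversal F P")
    case True
    then have "{T. T \<subseteq> U \<and> P \<subseteq> T \<and> card T = card P + Suc k \<and> minimal_transversal F T} = {}"
      by (auto dest: minimal_transversal_eq_if_transversal_subset[OF _ True])
    then show ?thesis by (metis card.empty le0)
  next
    case False
    then obtain S where S: "S \<in> F" "S \<inter> P = {}" unfolding transversal_def by blast
    have cardS: "card S \<le> r" and finS: "finite S" using F[OF S(1)] finite_subset[OF _ U] by auto
    let ?X = "\<lambda>Q. {T. T \<subseteq> U \<and> Q \<subseteq> T \<and> card T = card Q + k \<and> minimal_transversal F T}"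
    have branch: "{T. T \<subseteq> U \<and> P \<subseteq> T \<and> card T = card P + Suc k \<and> minimal_transversal F T}
        \<subseteq> (\<Union>a\<in>S. ?X (insert a P))"
    proof
      fix T assume "T \<in> {T. T \<subseteq> U \<and> P \<subseteq> T \<and> card T = card P + Suc k \<and> minimal_transversal F T}"
      then have T: "T \<subseteq> U" "P \<subseteq> T" "card T = card P + Suc k" "minimal_transversal F T" by auto
      then have "S \<inter> T \<noteq> {}" using S(1) unfolding minimal_transversal_def transversal_def by blast
      then obtain a where a: "a \<in> S" "a \<in> T" by blast
      have "finite P" using T(1,2) finite_subset[OF _ U] by blast
      moreover have "a \<notin> P" using a(1) S(2) by blast
      ultimately have "card (insert a P) = card P + 1" by simp
      then show "T \<in> (\<Union>a\<in>S. ?X (insert a P))" using T a by auto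
    qed
    have "card {T. T \<subseteq> U \<and> P \<subseteq> T \<and> card T = card P + Suc k \<and> minimal_transversal F T}
        \<le> card (\<Union>a\<in>S. ?X (insert a P))"
      by (rule card_mono[OF finite_subset[of _ "Pow U"] branch]) (use U in auto)
    also have "\<dots> \<le> (\<Sum>a\<in>S. card (?X (insert a P)))" by (rule card_UN_le[OF finS])
    also have "\<dots> \<le> (\<Sum>a\<in>S. r ^ k)" by (intro sum_mono Suc.IH)
    also have "\<dots> = card S * r ^ k" by simp
    also have "\<dots> \<le> r ^ Suc k" using cardS by simp
    finally show ?thesis .
  qed
qed

lemma card_minimal_transversals_le:
  assumes "finite U" and "\<And>A. A \<in> F \<Longrightarrow> A \<subseteq> U \<and> card A \<le> r"
  shows "card {T. T \<subseteq> U \<and> card T = k \<and> minimal_transversal F T} \<le> r ^ k"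
  using card_minimal_transversals_extending_le[OF assms, where P = "{}"] by simp

lemma maximal_intersecting_memI:
  assumes "maximal_intersecting n r F" "G \<subseteq> {1..n}" "card G = r" "transversal F G"
  shows "G \<in> F"
  using assms unfolding maximal_intersecting_def transversal_def by blast

lemma maximal_intersecting_exchange:
  assumes F: "maximal_intersecting n r F" and A: "A \<in> F" and x: "x \<in> {1..n}" "x \<notin> A"
    and not_minimal: "\<not> minimal_transversal F A"
  shows "\<exists>a\<in>A. insert x (A - {a}) \<in> F"
proof -
  have A_sub: "A \<subseteq> {1..n}" and A_card: "card A = r"
    using F A unfolding maximal_intersecting_def by auto
  have "transversal F A"
    using F A unfolding maximal_intersecting_def intersecting_def transversal_def by blast
  then obtain B where B: "B \<subset> A" "transversal F B"
    using not_minimal unfolding minimal_transversal_def by blast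
  then obtain a where a: "a \<in> A" "a \<notin> B" by blast
  have "finite A" using finite_subset[OF A_sub] by simp
  then have "card (insert x (A - {a})) = Suc (card A - 1)" using a x by simp
  also have "\<dots> = r" using \<open>finite A\<close> a A_card card_gt_0_iff[of A] by auto
  finally have "card (insert x (A - {a})) = r" .
  moreover have "transversal F (insert x (A - {a}))"
    using B a unfolding transversal_def by blast
  moreover have "insert x (A - {a}) \<subseteq> {1..n}" using A_sub x by blast
  ultimately have "insert x (A - {a}) \<in> F" using maximal_intersecting_memI[OF F] by blast
  then show ?thesis using a by blast
qed

lemma card_maximal_intersecting_le:
  assumes F: "maximal_intersecting n r F" and x: "x \<in> {1..n}"
  shows "card F \<le> (n - r + 1) * degree F x + r ^ r"
proof -
  have F_sub: "\<And>A. A \<in> F \<Longrightarrow> A \<subseteq> {1..n} \<and> card A = r"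
    using F unfolding maximal_intersecting_def by auto
  have finF: "finite F" by (rule finite_subset[of F "Pow {1..n}"]) (use F_sub in auto)
  define Fx where "Fx = {A\<in>F. x \<in> A}"
  define Fexch where "Fexch = {A\<in>F. x \<notin> A \<and> \<not> minimal_transversal F A}"
  define Fmin where "Fmin = {T. T \<subseteq> {1..n} \<and> card T = r \<and> minimal_transversal F T}"
  have cover: "F \<subseteq> Fx \<union> Fexch \<union> Fmin" unfolding Fx_def Fexch_def Fmin_def using F_sub by auto
  have card_Fmin: "card Fmin \<le> r ^ r"
    unfolding Fmin_def by (rule card_minimal_transversals_le) (use F_sub in auto)
  define exch where "exch = (\<lambda>(A', a). insert a (A' - {x}))"
  have "Fexch \<subseteq> exch ` (SIGMA A':Fx. {1..n} - A')"
  proof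
    fix A assume "A \<in> Fexch"
    then have A: "A \<in> F" "x \<notin> A" "\<not> minimal_transversal F A" unfolding Fexch_def by auto
    then obtain a where a: "a \<in> A" "insert x (A - {a}) \<in> F"
      using maximal_intersecting_exchange[OF F _ x] by blast
    then have "(insert x (A - {a}), a) \<in> (SIGMA A':Fx. {1..n} - A')"
      using F_sub[OF A(1)] A(2) unfolding Fx_def by auto
    moreover have "exch (insert x (A - {a}), a) = A" unfolding exch_def using a A(2) by auto
    ultimately show "A \<in> exch ` (SIGMA A':Fx. {1..n} - A')" by force
  qed
  moreover have finSigma: "finite (SIGMA A':Fx. {1..n} - A')" using finF unfolding Fx_def by simp
  ultimately have "card Fexch \<le> card (SIGMA A':Fx. {1..n} - A')"
    by (meson card_image_le card_mono finite_imageI order_trans)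
  also have "\<dots> = (\<Sum>A'\<in>Fx. card ({1..n} - A'))" using finF unfolding Fx_def by simp
  also have "\<dots> = card Fx * (n - r)"
    using F_sub finite_subset[of _ "{1..n}"] by (simp add: Fx_def card_Diff_subset)
  finally have card_Fexch: "card Fexch \<le> card Fx * (n - r)" .
  have "finite Fx" "finite Fexch" "finite Fmin"
    using finF unfolding Fx_def Fexch_def Fmin_def by auto
  then have "card F \<le> card Fx + card Fexch + card Fmin"
    using card_mono[OF _ cover] card_Un_le[of "Fx \<union> Fexch" Fmin] card_Un_le[of Fx Fexch]
    by simp
  also have "\<dots> \<le> (n - r + 1) * degree F x + r ^ r"
    using card_Fexch card_Fmin unfolding degree_def Fx_def by (simp add: algebra_simps)
  finally show ?thesis .
qed

lemma admissible_subset_Pow: "F \<in> admissible n r \<Longrightarrow> F \<subseteq> Pow {1..n}"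
  unfolding admissible_def maximal_intersecting_def by auto

lemma finite_admissible: "finite (admissible n r)"
  using admissible_subset_Pow by (blast intro: finite_subset[of _ "Pow (Pow {1..n})"])

lemma degree_pos_if_admissible:
  assumes F: "F \<in> admissible n r" and y: "y \<in> {1..n}"
  shows "0 < degree F y"
proof -
  have "y \<in> \<Union>F" using F y unfolding admissible_def by auto
  moreover have "finite F" using finite_subset[OF admissible_subset_Pow[OF F]] by simp
  ultimately show ?thesis unfolding degree_def by (auto simp: card_gt_0_iff)
qed

lemma ratio_eq_degree_divide:
  assumes "0 < n"
  obtains x y where "x \<in> {1..n}" "y \<in> {1..n}" "ratio n F = real (degree F y) / real (degree F x)"
proof -
  have "degree F ` {1..n} \<noteq> {}" using assms by auto
  then have "min_degree n F \<in> degree F ` {1..n}" "max_degree n F \<in> degree F ` {1..n}"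
    unfolding min_degree_def max_degree_def by (simp_all add: Min_in Max_in)
  then obtain x y where "x \<in> {1..n}" "min_degree n F = degree F x"
    "y \<in> {1..n}" "max_degree n F = degree F y" by (metis imageE)
  then show ?thesis using that unfolding ratio_def by simp
qed

lemma degree_divide_le_ratio:
  assumes F: "F \<in> admissible n r" and x: "x \<in> {1..n}" and y: "y \<in> {1..n}"
  shows "real (degree F y) / real (degree F x) \<le> ratio n F"
proof -
  have "min_degree n F \<in> degree F ` {1..n}"
    unfolding min_degree_def using x by (intro Min_in) auto
  then have "0 < min_degree n F" using degree_pos_if_admissible[OF F] by auto
  moreover have "min_degree n F \<le> degree F x" "degree F y \<le> max_degree n F"
    unfolding min_degree_def max_degree_def using x y by auto
  ultimately show ?thesis
    unfolding ratio_def by (intro frac_le) auto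
qed

lemma ratio_le:
  assumes F: "F \<in> admissible n r" and n: "0 < n"
  shows "ratio n F \<le> real n + real r ^ r"
proof -
  obtain x y where x: "x \<in> {1..n}" and y: "y \<in> {1..n}"
    and ratio: "ratio n F = real (degree F y) / real (degree F x)"
    using ratio_eq_degree_divide[OF n] .
  have F_max: "maximal_intersecting n r F" using F unfolding admissible_def by blast
  have dx: "0 < degree F x" using degree_pos_if_admissible[OF F x] .
  obtain A where A: "A \<in> F" "x \<in> A"
    using dx unfolding degree_def by (auto simp: card_gt_0_iff)
  then have A_sub: "A \<subseteq> {1..n}" and A_card: "card A = r"
    using F_max unfolding maximal_intersecting_def by auto
  then have "r \<le> n" using card_mono[OF _ A_sub] by simp
  moreover have "0 < r" using A A_card finite_subset[OF A_sub] card_gt_0_iff by auto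
  ultimately have "n - r + 1 \<le> n" by simp
  have "degree F y \<le> card F"
    unfolding degree_def using finite_subset[OF admissible_subset_Pow[OF F]]
    by (intro card_mono) auto
  also have "\<dots> \<le> (n - r + 1) * degree F x + r ^ r"
    using card_maximal_intersecting_le[OF F_max x] .
  also have "\<dots> \<le> n * degree F x + r ^ r * degree F x"
    using \<open>n - r + 1 \<le> n\<close> dx by (intro add_mono mult_right_mono) auto
  finally have "real (degree F y) \<le> (real n + real r ^ r) * real (degree F x)"
    by (simp add: algebra_simps flip: of_nat_mult of_nat_power of_nat_add)
  then show ?thesis using dx by (simp add: ratio pos_divide_le_eq)
qed

lemma card_add_le_of_disjoint_subsets:
  assumes C: "finite C" and XY: "X \<subseteq> C" "Y \<subseteq> C" "X \<inter> Y = {}"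
  shows "card X + card Y \<le> card C"
proof -
  have "card X + card Y = card (X \<union> Y)"
    using card_Un_disjoint[of X Y] finite_subset[OF XY(1) C] finite_subset[OF XY(2) C] XY(3) by simp
  also have "\<dots> \<le> card C" using C XY by (intro card_mono) auto
  finally show ?thesis .
qed

definition core :: "nat \<Rightarrow> nat set" where
  "core r = {2..2 * r - 2}"

definition core_star_family :: "nat \<Rightarrow> nat \<Rightarrow> nat set set" where
  "core_star_family n r = {A. A \<subseteq> {1..n} \<and> card A = r \<and>
     (A \<subseteq> core r \<or> (1 \<in> A \<and> r - 2 \<le> card (A \<inter> core r)))}"

lemma finite_core [simp]: "finite (core r)"
  unfolding core_def by simp

lemma card_core: "card (core r) = 2 * r - 3"
  unfolding core_def by simp

lemma one_notin_core [simp]: "1 \<notin> core r"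
  unfolding core_def by simp

lemma insert_one_core: "2 \<le> r \<Longrightarrow> insert 1 (core r) = {1..2 * r - 2}"
  unfolding core_def by auto

lemma core_subset: "2 * r \<le> n + 2 \<Longrightarrow> core r \<subseteq> {1..n}"
  unfolding core_def by auto

lemma card_Int_core_ge:
  "A \<in> core_star_family n r \<Longrightarrow> r - 2 \<le> card (A \<inter> core r)"
  unfolding core_star_family_def by (auto simp: Int_absorb2)

lemma core_star_family_memI:
  assumes r: "2 \<le> r" and n: "2 * r \<le> n + 2" and S: "S \<subseteq> core r" "card S = r - 2"
    and z: "z \<in> {1..n}" "z \<noteq> 1" "z \<notin> S"
  shows "insert 1 (insert z S) \<in> core_star_family n r"
proof -
  have "finite S" using finite_subset[OF S(1)] by simp
  moreover have "1 \<notin> S" using S(1) one_notin_core by blast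
  ultimately have card: "card (insert 1 (insert z S)) = r" using z(2,3) S(2) r by simp
  have "S \<subseteq> insert 1 (insert z S) \<inter> core r" using S(1) by blast
  then have "r - 2 \<le> card (insert 1 (insert z S) \<inter> core r)"
    using S(2) by (metis card_mono finite_Int finite_core)
  moreover have "insert 1 (insert z S) \<subseteq> {1..n}" using S(1) z(1) core_subset[OF n] r n by auto
  ultimately show ?thesis using card unfolding core_star_family_def by blast
qed

lemma core_star_family_intersecting:
  assumes r: "2 \<le> r"
  shows "intersecting (core_star_family n r)"
proof -
  have inside: "A \<inter> B \<noteq> {}"
    if A: "A \<in> core_star_family n r" "A \<subseteq> core r" and B: "B \<in> core_star_family n r" for A B
  proof
    assume "A \<inter> B = {}"
    then have "card A + card (B \<inter> core r) \<le> card (core r)"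
      using A(2) by (intro card_add_le_of_disjoint_subsets) auto
    then show False
      using A(1) card_Int_core_ge[OF B] card_core[of r] r unfolding core_star_family_def by auto
  qed
  have "A \<inter> B \<noteq> {}" if A: "A \<in> core_star_family n r" and B: "B \<in> core_star_family n r" for A B
  proof (cases "1 \<in> A \<and> 1 \<in> B")
    case False
    then have "A \<subseteq> core r \<or> B \<subseteq> core r" using A B unfolding core_star_family_def by auto
    then show ?thesis using inside[OF A _ B] inside[OF B _ A] by blast
  qed blast
  then show ?thesis unfolding intersecting_def by blast
qed

lemma core_star_family_maximal:
  assumes r: "2 \<le> r" and n: "2 * r \<le> n"
    and G: "G \<subseteq> {1..n}" "card G = r" "G \<notin> core_star_family n r"
  shows "\<exists>A\<in>core_star_family n r. A \<inter> G = {}"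
proof -
  have finG: "finite G" using finite_subset[OF G(1)] by simp
  have card_core_diff: "card (core r - G) = 2 * r - 3 - card (core r \<inter> G)"
    using card_Diff_subset_Int[of "core r" G] card_core[of r] by simp
  show ?thesis
  proof (cases "1 \<in> G")
    case True
    then have "card (core r \<inter> G) < r - 2" using G unfolding core_star_family_def by (auto simp: Int_commute)
    then have "r \<le> card (core r - G)" using card_core_diff r by linarith
    then obtain A where A: "A \<subseteq> core r - G" "card A = r" by (meson obtain_subset_with_card_n)
    then have "A \<in> core_star_family n r"
      unfolding core_star_family_def using core_subset[of r n] n by auto
    then show ?thesis using A(1) by blast
  next
    case False
    then have "\<not> G \<subseteq> core r" using G unfolding core_star_family_def by auto
    then have "card (core r \<inter> G) < r"
      using psubset_card_mono[OF finG, of "core r \<inter> G"] G(2) by auto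
    then have "r - 2 \<le> card (core r - G)" using card_core_diff r by linarith
    then obtain S where S: "S \<subseteq> core r - G" "card S = r - 2" by (meson obtain_subset_with_card_n)
    have finS: "finite S" using finite_subset[OF S(1)] by simp
    have "card (insert 1 (G \<union> S)) \<le> card G + card S + 1"
      using card_Un_le[of G S] finG finS by (simp add: card_insert_if)
    also have "\<dots> < n" using G(2) S(2) r n by simp
    finally have "card (insert 1 (G \<union> S)) < card {1..n}" by simp
    moreover have "finite (insert 1 (G \<union> S))" using finG finS by simp
    ultimately have "\<not> {1..n} \<subseteq> insert 1 (G \<union> S)" by (meson card_mono leD)
    then obtain z where z: "z \<in> {1..n}" "z \<notin> insert 1 (G \<union> S)" by blast
    have "insert 1 (insert z S) \<in> core_star_family n r"
      by (rule core_star_family_memI) (use r n S z in auto)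
    moreover have "insert 1 (insert z S) \<inter> G = {}" using False z S(1) by auto
    ultimately show ?thesis by blast
  qed
qed

lemma Union_core_star_family:
  assumes r: "2 \<le> r" and n: "2 * r \<le> n"
  shows "\<Union>(core_star_family n r) = {1..n}"
proof -
  have with_one: "\<exists>A\<in>core_star_family n r. 1 \<in> A \<and> y \<in> A" if y: "y \<in> {1..n}" "y \<noteq> 1" for y
  proof -
    have "card (core r - {y}) \<ge> r - 2" using card_core[of r] r by (auto simp: card_Diff_singleton_if)
    then obtain S where S: "S \<subseteq> core r - {y}" "card S = r - 2" by (meson obtain_subset_with_card_n)
    then have "insert 1 (insert y S) \<in> core_star_family n r"
      by (intro core_star_family_memI) (use r n y in auto)
    then show ?thesis by blast
  qed
  have "n \<in> {1..n}" "n \<noteq> 1" using r n by auto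
  then have "1 \<in> \<Union>(core_star_family n r)" using with_one by blast
  moreover have "\<Union>(core_star_family n r) \<subseteq> {1..n}" unfolding core_star_family_def by auto
  ultimately show ?thesis using with_one by blast
qed

lemma core_star_family_admissible:
  assumes r: "2 \<le> r" and n: "2 * r \<le> n"
  shows "core_star_family n r \<in> admissible n r"
proof -
  have "core_star_family n r \<subseteq> {A. A \<subseteq> {1..n} \<and> card A = r}"
    unfolding core_star_family_def by blast
  then show ?thesis
    using core_star_family_intersecting[OF r] core_star_family_maximal[OF r n]
      Union_core_star_family[OF r n]
    unfolding admissible_def maximal_intersecting_def by blast
qed

lemma core_star_family_containing_outside:
  assumes r: "2 \<le> r" and n: "2 * r \<le> n + 2" and z: "z \<in> {1..n}" "z \<notin> insert 1 (core r)"
  shows "{A \<in> core_star_family n r. z \<in> A}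
    = (\<lambda>S. insert 1 (insert z S)) ` {S. S \<subseteq> core r \<and> card S = r - 2}"
proof (intro equalityI subsetI)
  fix A assume A_mem: "A \<in> {A \<in> core_star_family n r. z \<in> A}"
  then have A: "A \<subseteq> {1..n}" "card A = r" "z \<in> A" "1 \<in> A"
    using z(2) unfolding core_star_family_def by auto
  let ?S = "A \<inter> core r"
  have "finite A" using finite_subset[OF A(1)] by simp
  have sub: "insert 1 (insert z ?S) \<subseteq> A" using A by blast
  have "1 \<notin> insert z ?S" "z \<notin> ?S" "finite ?S" using z(2) one_notin_core[of r] by auto
  then have card_ins: "card (insert 1 (insert z ?S)) = card ?S + 2" by simp
  have "card ?S + 2 \<le> r" using card_mono[OF \<open>finite A\<close> sub] card_ins A(2) by simp
  moreover have "r - 2 \<le> card ?S" using A_mem card_Int_core_ge by blast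
  ultimately have "card ?S = r - 2" "card (insert 1 (insert z ?S)) = card A"
    using A(2) card_ins by auto
  then have "A = insert 1 (insert z ?S)" "?S \<in> {S. S \<subseteq> core r \<and> card S = r - 2}"
    using card_subset_eq[OF \<open>finite A\<close> sub] by auto
  then show "A \<in> (\<lambda>S. insert 1 (insert z S)) ` {S. S \<subseteq> core r \<and> card S = r - 2}" by blast
next
  fix A assume "A \<in> (\<lambda>S. insert 1 (insert z S)) ` {S. S \<subseteq> core r \<and> card S = r - 2}"
  then obtain S where S: "S \<subseteq> core r" "card S = r - 2" and A: "A = insert 1 (insert z S)" by blast
  have "A \<in> core_star_family n r"
    unfolding A by (rule core_star_family_memI) (use r n S z in auto)
  then show "A \<in> {A \<in> core_star_family n r. z \<in> A}" using A by blast
qed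

lemma degree_core_star_family_outside:
  assumes r: "2 \<le> r" and n: "2 * r \<le> n + 2" and z: "z \<in> {1..n}" "z \<notin> insert 1 (core r)"
  shows "degree (core_star_family n r) z = (2 * r - 3) choose (r - 2)"
proof -
  have "inj_on (\<lambda>S. insert 1 (insert z S)) {S. S \<subseteq> core r \<and> card S = r - 2}"
    by (rule inj_on_inverseI[where g = "\<lambda>A. A - {1, z}"]) (use z one_notin_core[of r] in auto)
  then show ?thesis
    unfolding degree_def core_star_family_containing_outside[OF assms]
    by (simp add: card_image n_subsets card_core)
qed

lemma degree_core_star_family_one:
  assumes r: "2 \<le> r" and n: "2 * r \<le> n + 2"
  shows "(n - (2 * r - 2) + 1) * ((2 * r - 3) choose (r - 2)) \<le> degree (core_star_family n r) 1"
proof -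
  define F where "F = core_star_family n r"
  define d where "d = (2 * r - 3) choose (r - 2)"
  define outside where "outside = {1..n} - insert 1 (core r)"
  have out: "z \<in> {1..n}" "z \<notin> insert 1 (core r)" if "z \<in> outside" for z
    using that unfolding outside_def by auto
  have card_outside: "card outside = n - (2 * r - 2)"
    unfolding outside_def insert_one_core[OF r] using n by (subst card_Diff_subset) auto
  have finF: "finite F"
    unfolding F_def core_star_family_def by (rule finite_subset[of _ "Pow {1..n}"]) auto
  let ?through = "\<lambda>z. {A \<in> F. z \<in> A}"
  let ?inside = "insert 1 ` {T. T \<subseteq> core r \<and> card T = r - 1}"
  have through_shape: "\<exists>S \<subseteq> core r. A = insert 1 (insert z S)"
    if "z \<in> outside" "A \<in> ?through z" for z A
    using that core_star_family_containing_outside[OF r n out[OF that(1)]] unfolding F_def by blast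
  have through_disjoint: "?through z \<inter> ?through z' = {}"
    if zz: "z \<in> outside" "z' \<in> outside" "z \<noteq> z'" for z z'
  proof (rule ccontr)
    assume "?through z \<inter> ?through z' \<noteq> {}"
    then obtain A where A: "A \<in> ?through z" "z' \<in> A" by blast
    obtain S where "S \<subseteq> core r" "A = insert 1 (insert z S)" using through_shape[OF zz(1) A(1)] by blast
    then show False using out[OF zz(2)] zz(3) A(2) by blast
  qed
  have "card (\<Union>z\<in>outside. ?through z) = (\<Sum>z\<in>outside. degree F z)"
    unfolding degree_def using finF through_disjoint unfolding outside_def
    by (intro card_UN_disjoint) auto
  also have "\<dots> = card outside * d"
    using degree_core_star_family_outside[OF r n] out unfolding F_def d_def by simp
  finally have card_through: "card (\<Union>z\<in>outside. ?through z) = (n - (2 * r - 2)) * d"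
    using card_outside by simp
  have "inj_on (insert 1) {T. T \<subseteq> core r \<and> card T = r - 1}"
    by (rule inj_on_inverseI[where g = "\<lambda>A. A - {1}"]) (use one_notin_core[of r] in auto)
  then have "card ?inside = (2 * r - 3) choose (r - 1)" by (simp add: card_image n_subsets card_core)
  also have "\<dots> = d" unfolding d_def using r by (subst binomial_symmetric) auto
  finally have card_inside: "card ?inside = d" .
  have inside_sub: "?inside \<subseteq> {A \<in> F. 1 \<in> A}"
  proof
    fix A assume "A \<in> ?inside"
    then obtain T where T: "T \<subseteq> core r" "card T = r - 1" and A: "A = insert 1 T" by blast
    have "finite T" using finite_subset[OF T(1)] by simp
    moreover have "1 \<notin> T" using T(1) one_notin_core by blast
    ultimately have "card A = r" "A \<inter> core r = T" using T r A one_notin_core[of r] by auto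
    moreover have "A \<subseteq> {1..n}" using A T(1) core_subset[OF n] r n by auto
    ultimately show "A \<in> {A \<in> F. 1 \<in> A}" using T A unfolding F_def core_star_family_def by auto
  qed
  have "(\<Union>z\<in>outside. ?through z) \<subseteq> {A \<in> F. 1 \<in> A}" using through_shape by blast
  moreover have "(\<Union>z\<in>outside. ?through z) \<inter> ?inside = {}" using out by blast
  ultimately have "card (\<Union>z\<in>outside. ?through z) + card ?inside \<le> degree F 1"
    unfolding degree_def using finF inside_sub by (intro card_add_le_of_disjoint_subsets) auto
  then show ?thesis using card_through card_inside unfolding F_def d_def by (simp add: algebra_simps)
qed

lemma ratio_core_star_family_ge:
  assumes r: "2 \<le> r" and n: "2 * r \<le> n"
  shows "real n - 2 * real r + 3 \<le> ratio n (core_star_family n r)"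
proof -
  let ?d = "(2 * r - 3) choose (r - 2)"
  have adm: "core_star_family n r \<in> admissible n r" using core_star_family_admissible[OF r n] .
  have d_pos: "0 < ?d" using r by simp
  have "n \<in> {1..n}" "n \<notin> insert 1 (core r)" using r n unfolding core_def by auto
  then have deg_n: "degree (core_star_family n r) n = ?d"
    using degree_core_star_family_outside[OF r] n by simp
  have "real n - 2 * real r + 3 = real (n - (2 * r - 2) + 1)" using r n by (simp add: of_nat_diff)
  also have "\<dots> = real ((n - (2 * r - 2) + 1) * ?d) / real ?d"
    using d_pos by (simp only: of_nat_mult nonzero_mult_div_cancel_right of_nat_0_less_iff less_irrefl
        neq0_conv of_nat_eq_0_iff)
  also have "\<dots> \<le> real (degree (core_star_family n r) 1) / real ?d"
    using degree_core_star_family_one[OF r, of n] n by (intro divide_right_mono of_nat_mono) simp_all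
  also have "\<dots> \<le> ratio n (core_star_family n r)"
    using degree_divide_le_ratio[OF adm, of n 1] deg_n \<open>n \<in> {1..n}\<close> by simp
  finally show ?thesis .
qed

lemma ratio_le_M: "F \<in> admissible n r \<Longrightarrow> ratio n F \<le> M n r"
  unfolding M_def using finite_admissible by (intro Max_ge) auto

lemma M_le:
  assumes "admissible n r \<noteq> {}" and "0 < n"
  shows "M n r \<le> real n + real r ^ r"
proof -
  have "M n r \<in> ratio n ` admissible n r"
    unfolding M_def using assms(1) finite_admissible by (intro Max_in) auto
  then show ?thesis using ratio_le assms(2) by auto
qed

lemma M_ge:
  assumes "2 \<le> r" and "2 * r \<le> n"
  shows "real n - 2 * real r + 3 \<le> M n r"
  using ratio_core_star_family_ge[OF assms] ratio_le_M[OF core_star_family_admissible[OF assms]]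
  by linarith

text \<open>With s = log x / log log x one has s log s = log x - log x log log log x / log log x.\<close>
lemma power_self_le_of_less_ln_div_ln_ln:
  fixes x :: real
  assumes x: "1 < x" "1 < ln (ln x)" and r: "1 \<le> r" "real r < ln x / ln (ln x)"
  shows "real r ^ r \<le> x * exp (- (ln x * ln (ln (ln x)) / ln (ln x)))"
proof -
  define L where "L = ln x"
  define s where "s = L / ln L"
  have L: "0 < L" "1 < ln L" "L \<noteq> 1" using x unfolding L_def by auto
  have "real r \<le> s" using r(2) unfolding s_def L_def by simp
  moreover have "0 \<le> ln (real r)" using r(1) by simp
  moreover have "ln (real r) \<le> ln s" using \<open>real r \<le> s\<close> r(1) by simp
  ultimately have "real r * ln (real r) \<le> s * ln s" by (intro mult_mono) auto
  also have "s * ln s = L - L * ln (ln L) / ln L"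
    unfolding s_def using L by (simp add: ln_div field_simps)
  finally have "real r * ln (real r) \<le> L - L * ln (ln L) / ln L" .
  then have "real r ^ r \<le> exp (L - L * ln (ln L) / ln L)"
    using r(1) by (simp add: powr_realpow[symmetric] powr_def mult.commute)
  also have "\<dots> = x * exp (- (ln x * ln (ln (ln x)) / ln (ln x)))"
    unfolding L_def using x(1) by (simp add: exp_diff exp_minus field_simps)
  finally show ?thesis .
qed

lemma power_self_div_tendsto_0:
  fixes rr :: "nat \<Rightarrow> nat"
  assumes "\<forall>\<^sub>F n in sequentially. real (rr n) < ln (real n) / ln (ln (real n))"
  shows "(\<lambda>n. real (rr n) ^ rr n / real n) \<longlonglongrightarrow> 0"
proof (rule tendsto_sandwich[where f = "\<lambda>_. 0"])
  let ?bound = "\<lambda>n. 1 / real n + exp (- (ln (real n) * ln (ln (ln (real n))) / ln (ln (real n))))"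
  show "?bound \<longlonglongrightarrow> 0" by real_asymp
  have "\<forall>\<^sub>F n in sequentially. 1 < real n" "\<forall>\<^sub>F n in sequentially. 1 < ln (ln (real n))"
    by real_asymp+
  with assms show "\<forall>\<^sub>F n in sequentially. real (rr n) ^ rr n / real n \<le> ?bound n"
  proof eventually_elim
    case (elim n)
    show ?case
    proof (cases "rr n = 0")
      case False
      then have "real (rr n) ^ rr n \<le> real n * exp (- (ln (real n) * ln (ln (ln (real n))) / ln (ln (real n))))"
        using elim by (intro power_self_le_of_less_ln_div_ln_ln) auto
      then have "real (rr n) ^ rr n / real n
          \<le> exp (- (ln (real n) * ln (ln (ln (real n))) / ln (ln (real n))))"
        using elim by (simp add: divide_le_eq mult.commute)
      moreover have "0 \<le> 1 / real n" by simp
      ultimately show ?thesis by linarith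
    qed simp
  qed
qed (auto intro: always_eventually)

lemma eventually_ratio_le:
  fixes rr :: "nat \<Rightarrow> nat"
  assumes "\<forall>\<^sub>F n in sequentially. real (rr n) < ln (real n) / ln (ln (real n))" and "0 < \<epsilon>"
  shows "\<forall>\<^sub>F n in sequentially. \<forall>F\<in>admissible n (rr n). ratio n F \<le> (1 + \<epsilon>) * real n"
  using order_tendstoD(2)[OF power_self_div_tendsto_0[OF assms(1)] assms(2)]
    eventually_gt_at_top[of 0]
proof eventually_elim
  case (elim n)
  then have "real (rr n) ^ rr n \<le> \<epsilon> * real n" by (simp add: divide_less_eq)
  then show ?case using ratio_le elim(2) by (force simp: algebra_simps)
qed

lemma M_div_tendsto_1:
  fixes rr :: "nat \<Rightarrow> nat"
  assumes "filterlim rr at_top sequentially"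
    and "\<forall>\<^sub>F n in sequentially. real (rr n) < ln (real n) / ln (ln (real n))"
  shows "(\<lambda>n. M n (rr n) / real n) \<longlonglongrightarrow> 1"
proof -
  define q where "q n = real (rr n) ^ rr n / real n" for n
  have q: "q \<longlonglongrightarrow> 0" unfolding q_def by (rule power_self_div_tendsto_0[OF assms(2)])
  have "\<forall>\<^sub>F n in sequentially. 2 \<le> rr n" using assms(1) unfolding filterlim_at_top by blast
  moreover have "\<forall>\<^sub>F n in sequentially. q n < 1 / 4" using order_tendstoD(2)[OF q, of "1 / 4"] by simp
  moreover have "\<forall>\<^sub>F n in sequentially. 4 < real n" by real_asymp
  ultimately have bounds: "\<forall>\<^sub>F n in sequentially.
      1 - 2 * q n \<le> M n (rr n) / real n \<and> M n (rr n) / real n \<le> 1 + q n"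
  proof eventually_elim
    case (elim n)
    let ?r = "rr n"
    have n: "0 < real n" using elim by simp
    have "real ?r \<le> real ?r ^ ?r" using elim(1) by (simp add: self_le_power)
    also have "\<dots> = q n * real n" unfolding q_def using n by simp
    finally have r_small: "real ?r \<le> q n * real n" .
    also have "\<dots> \<le> real n / 4" using elim(2) n by (simp add: mult_right_mono)
    finally have "2 * ?r \<le> n" by linarith
    then have lower: "real n - 2 * real ?r + 3 \<le> M n ?r" using M_ge elim(1) by blast
    have "admissible n ?r \<noteq> {}" using core_star_family_admissible \<open>2 * ?r \<le> n\<close> elim(1) by blast
    then have upper: "M n ?r \<le> real n + q n * real n" using M_le n unfolding q_def by simp
    show ?case using lower upper r_small n by (simp add: field_simps)
  qed
  have lower: "\<forall>\<^sub>F n in sequentially. 1 - 2 * q n \<le> M n (rr n) / real n"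
    and upper: "\<forall>\<^sub>F n in sequentially. M n (rr n) / real n \<le> 1 + q n"
    by (rule eventually_mono[OF bounds], blast)+
  have "(\<lambda>n. 1 - 2 * q n) \<longlonglongrightarrow> 1" "(\<lambda>n. 1 + q n) \<longlonglongrightarrow> 1"
    using tendsto_diff[OF tendsto_const tendsto_mult[OF tendsto_const q], of 1 2]
      tendsto_add[OF tendsto_const q, of 1] by simp_all
  then show ?thesis by (rule tendsto_sandwich[OF lower upper])
qed

theorem theorem1:
  shows "(\<forall>n r F. 0 < n \<and> 0 < r \<and> F \<in> admissible n r \<longrightarrow>
            ratio n F \<le> real n + real r ^ r)
    \<and> (\<forall>rr :: nat \<Rightarrow> nat. (\<forall>n. 0 < rr n) \<and>
            (\<forall>\<^sub>F n in sequentially. real (rr n) < ln (real n) / ln (ln (real n))) \<longrightarrow>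
          (\<forall>\<epsilon>>0. \<forall>\<^sub>F n in sequentially. \<forall>F\<in>admissible n (rr n).
              ratio n F \<le> (1 + \<epsilon>) * real n))
    \<and> (\<forall>n r. 2 \<le> r \<and> 2 * r + 2 < n \<longrightarrow>
          M n r \<ge> real n - 2 * real r + 3
                   - (real n - 2 * real r + 2) / real ((2 * r - 3) choose (r - 2)))
    \<and> (\<forall>rr :: nat \<Rightarrow> nat. filterlim rr at_top sequentially \<and>
            (\<forall>\<^sub>F n in sequentially. real (rr n) < ln (real n) / ln (ln (real n))) \<longrightarrow>
          ((\<lambda>n. M n (rr n) / real n) \<longlonglongrightarrow> 1))"
proof (intro conjI allI impI)
  fix n r F assume "0 < n \<and> 0 < r \<and> F \<in> admissible n r"
  then show "ratio n F \<le> real n + real r ^ r" using ratio_le by blast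
next
  fix rr :: "nat \<Rightarrow> nat" and \<epsilon> :: real
  assume "(\<forall>n. 0 < rr n) \<and> (\<forall>\<^sub>F n in sequentially. real (rr n) < ln (real n) / ln (ln (real n)))"
    and "0 < \<epsilon>"
  then show "\<forall>\<^sub>F n in sequentially. \<forall>F\<in>admissible n (rr n). ratio n F \<le> (1 + \<epsilon>) * real n"
    using eventually_ratio_le by blast
next
  fix n r :: nat assume nr: "2 \<le> r \<and> 2 * r + 2 < n"
  then have "0 \<le> (real n - 2 * real r + 2) / real ((2 * r - 3) choose (r - 2))" by simp
  then show "M n r \<ge> real n - 2 * real r + 3
      - (real n - 2 * real r + 2) / real ((2 * r - 3) choose (r - 2))"
    using M_ge[of r n] nr by linarith
next
  fix rr :: "nat \<Rightarrow> nat"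
  assume "filterlim rr at_top sequentially \<and>
      (\<forall>\<^sub>F n in sequentially. real (rr n) < ln (real n) / ln (ln (real n)))"
  then show "(\<lambda>n. M n (rr n) / real n) \<longlonglongrightarrow> 1" using M_div_tendsto_1 by blast
qed

end
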